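(* In the setting described in the context, with probability $1-o(1)$ (as $m\to\infty$), we have for all $c\in C$ that $|g(c)|\le\frac{m}{\sqrt q}\log m$.
   Context: Two agents $a,b$, $m$ items, unknown utilities $u^a_i,u^b_i\in[0,1]$, additive. For an allocation (partition $(\mathcal{A}_a,\mathcal{A}_b)$ of $[m]$), $\mathrm{Envy}_{a\to b}=\sum_{i\in\mathcal{A}_b}u^a_i-\sum_{i\in\mathcal{A}_a}u^a_i$, $\mathrm{Envy}_{b\to a}=\sum_{i\in\mathcal{A}_a}u^b_i-\sum_{i\in\mathcal{A}_b}u^b_i$, $\mathrm{Envy}=\max$ of the two; assume $\min_{\mathcal{A}}\mathrm{Envy}(\mathcal{A})\le-\Delta$, with $\Delta=\Delta(m)$, $\Delta\ge m^{1/4}\log^2m$, $\Delta=o(m/\log m)$. Noise variance is $\sigma^2=1$ and $q=m\lceil15\frac{m^{3/2}}{\Delta^2}\log m+\log^2m\rceil$. Each item $i$ is queried $q/m$ times, each query returning independent $y^a\sim N(u^a_i,1)$, $y^b\sim N(u^b_i,1)$, and $v^\nu_i$ is the average of agent $\nu$'s observations for item $i$ (so $v^\nu_i\sim N(u^\nu_i,m/q)$, all independent). For $c>0$, $x_i(c)=1$ if $cv^a_i>v^b_i$ and $x_i(c)=-1$ otherwise; $e_a(c)=-\sum_ix_i(c)u^a_i$, $e_b(c)=\sum_ix_i(c)u^b_i$, $e'_a(c)=-\sum_ix_i(c)v^a_i$, $e'_b(c)=\sum_ix_i(c)v^b_i$; $g(c)=\frac1{1+c}\big(e_a(c)-e'_a(c)-ce_b(c)+ce'_b(c)\big)$.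 $C=\{k/m^3:k=1,2,\dots,m^6\}$. $\log$ is natural. *)

theory Defs
  imports "HOL-Probability.Probability" "HOL-Library.Landau_Symbols"
begin

text \<open>Items are indexed by {..<m}. An allocation is given by the set A of items
  assigned to agent a; agent b receives the complement {..<m} - A.\<close>

definition envy_ab :: "nat \<Rightarrow> (nat \<Rightarrow> real) \<Rightarrow> nat set \<Rightarrow> real" where
  "envy_ab m ua A = (\<Sum>i\<in>{..<m} - A. ua i) - (\<Sum>i\<in>A. ua i)"

definition envy_ba :: "nat \<Rightarrow> (nat \<Rightarrow> real) \<Rightarrow> nat set \<Rightarrow> real" where
  "envy_ba m ub A = (\<Sum>i\<in>A. ub i) - (\<Sum>i\<in>{..<m} - A. ub i)"

definition envy :: "nat \<Rightarrow> (nat \<Rightarrow> real) \<Rightarrow> (nat \<Rightarrow> real) \<Rightarrow> nat set \<Rightarrow> real" where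
  "envy m ua ub A = max (envy_ab m ua A) (envy_ba m ub A)"

definition nqueries :: "nat \<Rightarrow> real \<Rightarrow> real" where
  "nqueries m D = real m * of_int \<lceil>15 * (real m powr (3/2) / D ^ 2) * ln (real m) + (ln (real m))^2\<rceil>"

definition xsel :: "real \<Rightarrow> (nat \<Rightarrow> real) \<Rightarrow> (nat \<Rightarrow> real) \<Rightarrow> nat \<Rightarrow> real" where
  "xsel c va vb i = (if c * va i > vb i then 1 else -1)"

definition gfun :: "nat \<Rightarrow> (nat \<Rightarrow> real) \<Rightarrow> (nat \<Rightarrow> real) \<Rightarrow> (nat \<Rightarrow> real) \<Rightarrow> (nat \<Rightarrow> real)
    \<Rightarrow> real \<Rightarrow> real" where
  "gfun m ua ub va vb c =
     (let ea  = - (\<Sum>i<m. xsel c va vb i * ua i);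
          eb  =   (\<Sum>i<m. xsel c va vb i * ub i);
          ea' = - (\<Sum>i<m. xsel c va vb i * va i);
          eb' =   (\<Sum>i<m. xsel c va vb i * vb i)
      in (1 / (1 + c)) * (ea - ea' - c * eb + c * eb'))"

definition Cgrid :: "nat \<Rightarrow> real set" where
  "Cgrid m = (\<lambda>k. real k / real m ^ 3) ` {1..m ^ 6}"

text \<open>Joint law of the averaged observations (v^a_i, v^b_i), i < m: independent,
  v^nu_i ~ N(u^nu_i, m/q) (normal_density takes the standard deviation).\<close>
definition obs_measure :: "nat \<Rightarrow> (nat \<Rightarrow> real) \<Rightarrow> (nat \<Rightarrow> real) \<Rightarrow> real \<Rightarrow> (nat \<Rightarrow> real \<times> real) measure" where
  "obs_measure m ua ub q =
     (\<Pi>\<^sub>M i\<in>{..<m}. density lborel (normal_density (ua i) (sqrt (real m / q)))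
                  \<Otimes>\<^sub>M density lborel (normal_density (ub i) (sqrt (real m / q))))"

end

theory Submission
  imports Defs "HOL-Real_Asymp.Real_Asymp"
begin

text \<open>
  Write \<open>v\<^sup>\<nu>\<^sub>i = u\<^sup>\<nu>\<^sub>i + \<epsilon>\<^sup>\<nu>\<^sub>i\<close> with independent noise \<open>\<epsilon>\<^sup>\<nu>\<^sub>i \<sim> N(0, \<sigma>\<^sup>2)\<close>, \<open>\<sigma>\<^sup>2 = m/q\<close>.
  Then \<open>(1 + c) g(c) = \<Sum>\<^sub>i x\<^sub>i(c) (\<epsilon>\<^sup>a\<^sub>i + c \<epsilon>\<^sup>b\<^sub>i)\<close>, and the sign \<open>x\<^sub>i(c)\<close> depends on the
  noise only through \<open>c \<epsilon>\<^sup>a\<^sub>i - \<epsilon>\<^sup>b\<^sub>i\<close>. Rotating the Gaussian pair shows that this is independent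
  of \<open>\<epsilon>\<^sup>a\<^sub>i + c \<epsilon>\<^sup>b\<^sub>i\<close>, so each summand is exactly \<open>N(0, \<sigma>\<^sup>2 (1 + c\<^sup>2))\<close> and a Chernoff
  bound gives \<open>P(|g(c)| > m/\<surd>q \<cdot> log m) \<le> 2 exp(-(1 + c)\<^sup>2/(1 + c\<^sup>2) \<cdot> log\<^sup>2 m / 2)\<close>, which is
  at most \<open>2 exp(-log\<^sup>2 m / 2)\<close> for \<open>c > 0\<close>. A union bound over the \<open>m\<^sup>6\<close> grid points leaves
  a failure probability of at most \<open>2 m\<^sup>6 exp(-log\<^sup>2 m / 2) \<rightarrow> 0\<close>.
\<close>

lemma normal_density_mult_exp:
  assumes "\<tau> > 0"
  shows "normal_density 0 \<tau> z * exp (\<mu> * z) = exp (\<mu>\<^sup>2 * \<tau>\<^sup>2 / 2) * normal_density (\<mu> * \<tau>\<^sup>2) \<tau> z"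
proof -
  have "- z\<^sup>2 / (2 * \<tau>\<^sup>2) + \<mu> * z = \<mu>\<^sup>2 * \<tau>\<^sup>2 / 2 + - (z - \<mu> * \<tau>\<^sup>2)\<^sup>2 / (2 * \<tau>\<^sup>2)"
    using assms by (simp add: field_simps power2_eq_square)
  then show ?thesis
    unfolding normal_density_def by (simp add: mult_ac flip: exp_add)
qed

lemma nn_integral_normal_density_mult_exp:
  assumes "\<tau> > 0"
  shows "(\<integral>\<^sup>+z. ennreal (normal_density 0 \<tau> z * exp (\<mu> * z)) \<partial>lborel) = ennreal (exp (\<mu>\<^sup>2 * \<tau>\<^sup>2 / 2))"
proof -
  have "(\<integral>\<^sup>+z. ennreal (normal_density 0 \<tau> z * exp (\<mu> * z)) \<partial>lborel) =
        (\<integral>\<^sup>+z. ennreal (exp (\<mu>\<^sup>2 * \<tau>\<^sup>2 / 2)) * ennreal (normal_density (\<mu> * \<tau>\<^sup>2) \<tau> z) \<partial>lborel)"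
    using assms by (simp add: normal_density_mult_exp ennreal_mult)
  also have "\<dots> = ennreal (exp (\<mu>\<^sup>2 * \<tau>\<^sup>2 / 2)) * (\<integral>\<^sup>+z. ennreal (normal_density (\<mu> * \<tau>\<^sup>2) \<tau> z) \<partial>lborel)"
    by (rule nn_integral_cmult) measurable
  also have "(\<integral>\<^sup>+z. ennreal (normal_density (\<mu> * \<tau>\<^sup>2) \<tau> z) \<partial>lborel) = 1"
    using assms by (subst nn_integral_eq_integral) auto
  finally show ?thesis by simp
qed

text \<open>The substitution inverts \<open>(a, b) \<mapsto> (c (a - \<alpha>) - (b - \<beta>), (a - \<alpha>) + c (b - \<beta>))\<close>,
  a linear map of determinant \<open>1 + c\<^sup>2\<close>.\<close>

lemma nn_integral_lborel_linear_change:
  fixes c \<alpha> \<beta> :: real and G :: "real \<Rightarrow> real \<Rightarrow> ennreal"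
  assumes G[measurable]: "case_prod G \<in> borel_measurable (borel \<Otimes>\<^sub>M borel)"
  shows "(\<integral>\<^sup>+a. \<integral>\<^sup>+b. G a b \<partial>lborel \<partial>lborel) = (\<integral>\<^sup>+w. \<integral>\<^sup>+z.
    ennreal (1 / (1 + c\<^sup>2)) * G (\<alpha> + (c * w + z) / (1 + c\<^sup>2)) (\<beta> + (c * z - w) / (1 + c\<^sup>2)) \<partial>lborel \<partial>lborel)"
proof -
  have pos: "1 + c\<^sup>2 > 0"
    by (simp add: add_pos_nonneg)
  have "(\<integral>\<^sup>+a. \<integral>\<^sup>+b. G a b \<partial>lborel \<partial>lborel) =
        (\<integral>\<^sup>+a. \<integral>\<^sup>+w. G a (\<beta> + c * (a - \<alpha>) + (-1) * w) \<partial>lborel \<partial>lborel)"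
  proof (rule nn_integral_cong)
    fix a :: real
    have "G a \<in> borel_measurable borel"
      using measurable_Pair2[OF G, of a] by simp
    from nn_integral_real_affine[OF this, of "-1" "\<beta> + c * (a - \<alpha>)"]
    show "(\<integral>\<^sup>+b. G a b \<partial>lborel) = (\<integral>\<^sup>+w. G a (\<beta> + c * (a - \<alpha>) + (-1) * w) \<partial>lborel)"
      by simp
  qed
  also have "\<dots> = (\<integral>\<^sup>+w. \<integral>\<^sup>+a. G a (\<beta> + c * (a - \<alpha>) + (-1) * w) \<partial>lborel \<partial>lborel)"
    by (rule lborel_pair.Fubini'[symmetric]) measurable
  also have "\<dots> = (\<integral>\<^sup>+w. \<integral>\<^sup>+z.
      ennreal (1 / (1 + c\<^sup>2)) * G (\<alpha> + (c * w + z) / (1 + c\<^sup>2)) (\<beta> + (c * z - w) / (1 + c\<^sup>2)) \<partial>lborel \<partial>lborel)"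
  proof (rule nn_integral_cong)
    fix w :: real
    have "(\<lambda>a. G a (\<beta> + c * (a - \<alpha>) + (-1) * w)) \<in> borel_measurable borel"
      by measurable
    from nn_integral_real_affine[OF this, of "1 / (1 + c\<^sup>2)" "\<alpha> + c * w / (1 + c\<^sup>2)"]
    have "(\<integral>\<^sup>+a. G a (\<beta> + c * (a - \<alpha>) + (-1) * w) \<partial>lborel) = ennreal (1 / (1 + c\<^sup>2)) *
        \<integral>\<^sup>+z. G (\<alpha> + c * w / (1 + c\<^sup>2) + 1 / (1 + c\<^sup>2) * z)
          (\<beta> + c * (\<alpha> + c * w / (1 + c\<^sup>2) + 1 / (1 + c\<^sup>2) * z - \<alpha>) + (-1) * w) \<partial>lborel"
      using pos by simp
    also have "\<dots> = ennreal (1 / (1 + c\<^sup>2)) *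
        \<integral>\<^sup>+z. G (\<alpha> + (c * w + z) / (1 + c\<^sup>2)) (\<beta> + (c * z - w) / (1 + c\<^sup>2)) \<partial>lborel"
    proof -
      have "\<alpha> + c * w / (1 + c\<^sup>2) + 1 / (1 + c\<^sup>2) * z = \<alpha> + (c * w + z) / (1 + c\<^sup>2)" for z
        by (simp add: add_divide_distrib)
      moreover have "\<beta> + c * (\<alpha> + c * w / (1 + c\<^sup>2) + 1 / (1 + c\<^sup>2) * z - \<alpha>) + (-1) * w
          = \<beta> + (c * z - w) / (1 + c\<^sup>2)" for z
        using pos by (simp add: divide_simps) (simp add: algebra_simps power2_eq_square)
      ultimately show ?thesis
        by (simp only:)
    qed
    also have "\<dots> = \<integral>\<^sup>+z.
        ennreal (1 / (1 + c\<^sup>2)) * G (\<alpha> + (c * w + z) / (1 + c\<^sup>2)) (\<beta> + (c * z - w) / (1 + c\<^sup>2)) \<partial>lborel"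
      by (rule nn_integral_cmult[symmetric]) measurable
    finally show "(\<integral>\<^sup>+a. G a (\<beta> + c * (a - \<alpha>) + (-1) * w) \<partial>lborel) = \<integral>\<^sup>+z.
        ennreal (1 / (1 + c\<^sup>2)) * G (\<alpha> + (c * w + z) / (1 + c\<^sup>2)) (\<beta> + (c * z - w) / (1 + c\<^sup>2)) \<partial>lborel" .
  qed
  finally show ?thesis .
qed

definition gaussian_pair :: "real \<Rightarrow> real \<Rightarrow> real \<Rightarrow> (real \<times> real) measure" where
  "gaussian_pair \<mu>a \<mu>b \<sigma> = density lborel (normal_density \<mu>a \<sigma>) \<Otimes>\<^sub>M density lborel (normal_density \<mu>b \<sigma>)"

lemma prob_space_gaussian_pair: "\<sigma> > 0 \<Longrightarrow> prob_space (gaussian_pair \<mu>a \<mu>b \<sigma>)"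
  unfolding gaussian_pair_def by (intro prob_space_pair prob_space_normal_density)

lemma sets_gaussian_pair [measurable_cong]: "sets (gaussian_pair \<mu>a \<mu>b \<sigma>) = sets (borel \<Otimes>\<^sub>M borel)"
  unfolding gaussian_pair_def by (intro sets_pair_measure_cong) auto

lemma nn_integral_gaussian_pair:
  assumes "\<sigma> > 0" and f[measurable]: "f \<in> borel_measurable (borel \<Otimes>\<^sub>M borel)"
  shows "(\<integral>\<^sup>+x. f x \<partial>gaussian_pair \<mu>a \<mu>b \<sigma>) =
    (\<integral>\<^sup>+a. \<integral>\<^sup>+b. ennreal (normal_density \<mu>a \<sigma> a * normal_density \<mu>b \<sigma> b) * f (a, b) \<partial>lborel \<partial>lborel)"
proof -
  interpret Db: sigma_finite_measure "density lborel (normal_density \<mu>b \<sigma>)"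
    using assms(1) by (intro prob_space_imp_sigma_finite prob_space_normal_density)
  have "f \<in> borel_measurable (density lborel (normal_density \<mu>a \<sigma>) \<Otimes>\<^sub>M density lborel (normal_density \<mu>b \<sigma>))"
    by measurable
  from Db.nn_integral_fst[OF this] show ?thesis
    unfolding gaussian_pair_def
    by (simp add: nn_integral_density ennreal_mult mult.assoc flip: nn_integral_cmult)
qed

lemma normal_density_mult_normal_density:
  "normal_density \<mu> \<sigma> x * normal_density \<mu>' \<sigma> y = exp (- ((x - \<mu>)\<^sup>2 + (y - \<mu>')\<^sup>2) / (2 * \<sigma>\<^sup>2)) / (2 * pi * \<sigma>\<^sup>2)"
proof -
  have "sqrt (2 * pi * \<sigma>\<^sup>2) * sqrt (2 * pi * \<sigma>\<^sup>2) = 2 * pi * \<sigma>\<^sup>2"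
    by simp
  then show ?thesis
    unfolding normal_density_def by (simp add: add_divide_distrib diff_divide_distrib field_simps flip: exp_add)
qed

lemma normal_density_pair_linear_change:
  fixes c w z \<sigma> :: real
  defines "\<tau> \<equiv> \<sigma> * sqrt (1 + c\<^sup>2)"
  shows "normal_density \<mu>a \<sigma> (\<mu>a + (c * w + z) / (1 + c\<^sup>2)) * normal_density \<mu>b \<sigma> (\<mu>b + (c * z - w) / (1 + c\<^sup>2))
    = (1 + c\<^sup>2) * (normal_density 0 \<tau> w * normal_density 0 \<tau> z)"
proof -
  have pos: "1 + c\<^sup>2 > 0"
    by (simp add: add_pos_nonneg)
  have \<tau>2: "\<tau>\<^sup>2 = \<sigma>\<^sup>2 * (1 + c\<^sup>2)"
    unfolding \<tau>_def using pos by (simp add: power_mult_distrib)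
  have "(\<mu>a + (c * w + z) / (1 + c\<^sup>2) - \<mu>a)\<^sup>2 + (\<mu>b + (c * z - w) / (1 + c\<^sup>2) - \<mu>b)\<^sup>2
      = (w\<^sup>2 + z\<^sup>2) / (1 + c\<^sup>2)"
    using pos by (simp add: divide_simps) (simp add: algebra_simps power2_eq_square)
  then have "- ((\<mu>a + (c * w + z) / (1 + c\<^sup>2) - \<mu>a)\<^sup>2 + (\<mu>b + (c * z - w) / (1 + c\<^sup>2) - \<mu>b)\<^sup>2) / (2 * \<sigma>\<^sup>2)
      = - ((w - 0)\<^sup>2 + (z - 0)\<^sup>2) / (2 * \<tau>\<^sup>2)"
    unfolding \<tau>2 by (simp add: mult_ac minus_divide_left)
  moreover have "(1 + c\<^sup>2) * (E / (2 * pi * \<tau>\<^sup>2)) = E / (2 * pi * \<sigma>\<^sup>2)" for E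
    unfolding \<tau>2 using pos by simp
  ultimately show ?thesis
    unfolding normal_density_mult_normal_density by simp
qed

lemma nn_integral_gaussian_pair_rotate:
  fixes c :: real and H :: "real \<Rightarrow> real \<Rightarrow> ennreal"
  assumes \<sigma>: "\<sigma> > 0" and H[measurable]: "case_prod H \<in> borel_measurable (borel \<Otimes>\<^sub>M borel)"
  defines "\<tau> \<equiv> \<sigma> * sqrt (1 + c\<^sup>2)"
  shows "(\<integral>\<^sup>+x. H (c * (fst x - \<mu>a) - (snd x - \<mu>b)) ((fst x - \<mu>a) + c * (snd x - \<mu>b)) \<partial>gaussian_pair \<mu>a \<mu>b \<sigma>)
    = (\<integral>\<^sup>+w. \<integral>\<^sup>+z. ennreal (normal_density 0 \<tau> w * normal_density 0 \<tau> z) * H w z \<partial>lborel \<partial>lborel)"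
proof -
  have pos: "1 + c\<^sup>2 > 0"
    by (simp add: add_pos_nonneg)
  have w: "c * (\<mu>a + (c * w + z) / (1 + c\<^sup>2) - \<mu>a) - (\<mu>b + (c * z - w) / (1 + c\<^sup>2) - \<mu>b) = w"
    and z: "(\<mu>a + (c * w + z) / (1 + c\<^sup>2) - \<mu>a) + c * (\<mu>b + (c * z - w) / (1 + c\<^sup>2) - \<mu>b) = z" for w z
    using pos by (simp_all add: divide_simps) (simp_all add: algebra_simps power2_eq_square)
  have density: "ennreal (1 / (1 + c\<^sup>2)) * ennreal (normal_density \<mu>a \<sigma> (\<mu>a + (c * w + z) / (1 + c\<^sup>2)) *
      normal_density \<mu>b \<sigma> (\<mu>b + (c * z - w) / (1 + c\<^sup>2))) = ennreal (normal_density 0 \<tau> w * normal_density 0 \<tau> z)" for w z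
    using pos unfolding normal_density_pair_linear_change \<tau>_def by (simp flip: ennreal_mult)
  have "(\<integral>\<^sup>+x. H (c * (fst x - \<mu>a) - (snd x - \<mu>b)) ((fst x - \<mu>a) + c * (snd x - \<mu>b)) \<partial>gaussian_pair \<mu>a \<mu>b \<sigma>)
      = (\<integral>\<^sup>+a. \<integral>\<^sup>+b. ennreal (normal_density \<mu>a \<sigma> a * normal_density \<mu>b \<sigma> b) *
          H (c * (a - \<mu>a) - (b - \<mu>b)) ((a - \<mu>a) + c * (b - \<mu>b)) \<partial>lborel \<partial>lborel)"
    using \<sigma> by (subst nn_integral_gaussian_pair) simp_all
  also have "\<dots> = (\<integral>\<^sup>+w. \<integral>\<^sup>+z. ennreal (1 / (1 + c\<^sup>2)) *
      (ennreal (normal_density \<mu>a \<sigma> (\<mu>a + (c * w + z) / (1 + c\<^sup>2)) * normal_density \<mu>b \<sigma> (\<mu>b + (c * z - w) / (1 + c\<^sup>2))) *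
       H w z) \<partial>lborel \<partial>lborel)"
  proof -
    have "(\<lambda>(a, b). ennreal (normal_density \<mu>a \<sigma> a * normal_density \<mu>b \<sigma> b) *
        H (c * (a - \<mu>a) - (b - \<mu>b)) ((a - \<mu>a) + c * (b - \<mu>b))) \<in> borel_measurable (borel \<Otimes>\<^sub>M borel)"
      by measurable
    from nn_integral_lborel_linear_change[OF this, of c \<mu>a \<mu>b] show ?thesis
      by (simp only: w z)
  qed
  also have "\<dots> = (\<integral>\<^sup>+w. \<integral>\<^sup>+z. ennreal (normal_density 0 \<tau> w * normal_density 0 \<tau> z) * H w z \<partial>lborel \<partial>lborel)"
    by (simp only: mult.assoc[symmetric] density)
  finally show ?thesis .
qed

definition signed_noise :: "real \<Rightarrow> real \<Rightarrow> real \<Rightarrow> real \<times> real \<Rightarrow> real" where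
  "signed_noise c \<mu>a \<mu>b x = (if c * fst x > snd x then 1 else -1) * ((fst x - \<mu>a) + c * (snd x - \<mu>b))"

lemma borel_measurable_signed_noise [measurable]:
  "signed_noise c \<mu>a \<mu>b \<in> borel_measurable (borel \<Otimes>\<^sub>M borel)"
  unfolding signed_noise_def by measurable

lemma nn_integral_exp_signed_noise:
  assumes \<sigma>: "\<sigma> > 0"
  shows "(\<integral>\<^sup>+x. ennreal (exp (l * signed_noise c \<mu>a \<mu>b x)) \<partial>gaussian_pair \<mu>a \<mu>b \<sigma>)
    = ennreal (exp (l\<^sup>2 * (\<sigma>\<^sup>2 * (1 + c\<^sup>2)) / 2))"
proof -
  define \<tau> where "\<tau> = \<sigma> * sqrt (1 + c\<^sup>2)"
  have \<tau>: "\<tau> > 0" and \<tau>2: "\<tau>\<^sup>2 = \<sigma>\<^sup>2 * (1 + c\<^sup>2)"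
    unfolding \<tau>_def using \<sigma> by (simp_all add: add_pos_nonneg power_mult_distrib)
  define s where "s w = (if w > \<mu>b - c * \<mu>a then 1 else -1 :: real)" for w
  define H where "H w z = ennreal (exp ((l * s w) * z))" for w z
  have [measurable]: "case_prod H \<in> borel_measurable (borel \<Otimes>\<^sub>M borel)"
    unfolding H_def s_def by measurable
  have "signed_noise c \<mu>a \<mu>b x = s (c * (fst x - \<mu>a) - (snd x - \<mu>b)) * ((fst x - \<mu>a) + c * (snd x - \<mu>b))" for x
    unfolding signed_noise_def s_def by (simp add: algebra_simps)
  then have "(\<integral>\<^sup>+x. ennreal (exp (l * signed_noise c \<mu>a \<mu>b x)) \<partial>gaussian_pair \<mu>a \<mu>b \<sigma>)
      = (\<integral>\<^sup>+x. H (c * (fst x - \<mu>a) - (snd x - \<mu>b)) ((fst x - \<mu>a) + c * (snd x - \<mu>b)) \<partial>gaussian_pair \<mu>a \<mu>b \<sigma>)"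
    unfolding H_def by (simp add: mult.assoc)
  also have "\<dots> = (\<integral>\<^sup>+w. \<integral>\<^sup>+z. ennreal (normal_density 0 \<tau> w * normal_density 0 \<tau> z) * H w z \<partial>lborel \<partial>lborel)"
    unfolding \<tau>_def using \<sigma> by (rule nn_integral_gaussian_pair_rotate) measurable
  also have "\<dots> = (\<integral>\<^sup>+w. ennreal (normal_density 0 \<tau> w) *
      (\<integral>\<^sup>+z. ennreal (normal_density 0 \<tau> z * exp ((l * s w) * z)) \<partial>lborel) \<partial>lborel)"
  proof (rule nn_integral_cong)
    fix w
    have "(\<integral>\<^sup>+z. ennreal (normal_density 0 \<tau> w * normal_density 0 \<tau> z) * H w z \<partial>lborel)
        = (\<integral>\<^sup>+z. ennreal (normal_density 0 \<tau> w) * ennreal (normal_density 0 \<tau> z * exp ((l * s w) * z)) \<partial>lborel)"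
      unfolding H_def by (simp add: ennreal_mult mult.assoc)
    also have "\<dots> = ennreal (normal_density 0 \<tau> w) *
        (\<integral>\<^sup>+z. ennreal (normal_density 0 \<tau> z * exp ((l * s w) * z)) \<partial>lborel)"
      by (rule nn_integral_cmult) measurable
    finally show "(\<integral>\<^sup>+z. ennreal (normal_density 0 \<tau> w * normal_density 0 \<tau> z) * H w z \<partial>lborel)
        = ennreal (normal_density 0 \<tau> w) * (\<integral>\<^sup>+z. ennreal (normal_density 0 \<tau> z * exp ((l * s w) * z)) \<partial>lborel)" .
  qed
  also have "\<dots> = (\<integral>\<^sup>+w. ennreal (exp (l\<^sup>2 * \<tau>\<^sup>2 / 2)) * ennreal (normal_density 0 \<tau> w) \<partial>lborel)"
  proof (rule nn_integral_cong)
    fix w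
    have "(l * s w)\<^sup>2 = l\<^sup>2"
      unfolding s_def by (simp add: power_mult_distrib)
    then show "ennreal (normal_density 0 \<tau> w) * (\<integral>\<^sup>+z. ennreal (normal_density 0 \<tau> z * exp ((l * s w) * z)) \<partial>lborel)
        = ennreal (exp (l\<^sup>2 * \<tau>\<^sup>2 / 2)) * ennreal (normal_density 0 \<tau> w)"
      using nn_integral_normal_density_mult_exp[OF \<tau>, of "l * s w"] by (simp add: mult.commute)
  qed
  also have "\<dots> = ennreal (exp (l\<^sup>2 * \<tau>\<^sup>2 / 2)) * (\<integral>\<^sup>+w. ennreal (normal_density 0 \<tau> w) \<partial>lborel)"
    by (rule nn_integral_cmult) measurable
  also have "(\<integral>\<^sup>+w. ennreal (normal_density 0 \<tau> w) \<partial>lborel) = 1"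
    using \<tau> by (subst nn_integral_eq_integral) auto
  finally show ?thesis
    by (simp add: \<tau>2)
qed

context product_prob_space
begin

lemma sum_upper_tail_subgaussian:
  fixes f :: "'i \<Rightarrow> 'a \<Rightarrow> real" and v T :: real
  assumes I: "finite I" "I \<noteq> {}" and v: "v > 0" and T: "T > 0"
    and f[measurable]: "\<And>i. i \<in> I \<Longrightarrow> f i \<in> borel_measurable (M i)"
    and mgf: "\<And>i l. i \<in> I \<Longrightarrow> (\<integral>\<^sup>+x. ennreal (exp (l * f i x)) \<partial>M i) \<le> ennreal (exp (l\<^sup>2 * v / 2))"
  shows "measure (Pi\<^sub>M I M) {\<omega> \<in> space (Pi\<^sub>M I M). T \<le> (\<Sum>i\<in>I. f i (\<omega> i))} \<le> exp (- T\<^sup>2 / (2 * card I * v))"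
proof -
  define n where "n = real (card I)"
  have n: "n > 0"
    unfolding n_def using I by (simp add: card_gt_0_iff)
  define l where "l = T / (n * v)"
  have l: "l > 0"
    unfolding l_def using n v T by simp
  have "ennreal (measure (Pi\<^sub>M I M) {\<omega> \<in> space (Pi\<^sub>M I M). (\<Sum>i\<in>I. f i (\<omega> i)) \<ge> T})
      = emeasure (Pi\<^sub>M I M) {\<omega> \<in> space (Pi\<^sub>M I M). (\<Sum>i\<in>I. f i (\<omega> i)) \<ge> T}"
    by (simp add: P.emeasure_eq_measure)
  also have "\<dots> \<le> ennreal (exp (- l * T)) *
      (\<integral>\<^sup>+\<omega>. ennreal (exp (l * (\<Sum>i\<in>I. f i (\<omega> i)))) * indicator (space (Pi\<^sub>M I M)) \<omega> \<partial>Pi\<^sub>M I M)"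
    using I by (intro Chernoff_ineq_nn_integral_ge l) auto
  also have "(\<integral>\<^sup>+\<omega>. ennreal (exp (l * (\<Sum>i\<in>I. f i (\<omega> i)))) * indicator (space (Pi\<^sub>M I M)) \<omega> \<partial>Pi\<^sub>M I M)
      = (\<integral>\<^sup>+\<omega>. (\<Prod>i\<in>I. ennreal (exp (l * f i (\<omega> i)))) \<partial>Pi\<^sub>M I M)"
    using I by (intro nn_integral_cong) (simp add: sum_distrib_left exp_sum prod_ennreal)
  also have "\<dots> = (\<Prod>i\<in>I. \<integral>\<^sup>+x. ennreal (exp (l * f i x)) \<partial>M i)"
    using I by (intro product_nn_integral_prod) auto
  also have "ennreal (exp (- l * T)) * \<dots> \<le> ennreal (exp (- l * T)) * (\<Prod>i\<in>I. ennreal (exp (l\<^sup>2 * v / 2)))"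
    by (intro mult_left_mono prod_mono_ennreal mgf) auto
  also have "\<dots> = ennreal (exp (- l * T + n * (l\<^sup>2 * v / 2)))"
    unfolding n_def exp_add exp_of_nat_mult by (simp add: ennreal_power flip: ennreal_mult)
  also have "- l * T + n * (l\<^sup>2 * v / 2) = - T\<^sup>2 / (2 * n * v)"
    unfolding l_def using n v by (simp add: field_simps power2_eq_square)
  finally show ?thesis
    unfolding n_def by (simp add: ennreal_le_iff)
qed

lemma sum_abs_tail_subgaussian:
  fixes f :: "'i \<Rightarrow> 'a \<Rightarrow> real" and v T :: real
  assumes I: "finite I" "I \<noteq> {}" and v: "v > 0" and T: "T > 0"
    and f[measurable]: "\<And>i. i \<in> I \<Longrightarrow> f i \<in> borel_measurable (M i)"
    and mgf: "\<And>i l. i \<in> I \<Longrightarrow> (\<integral>\<^sup>+x. ennreal (exp (l * f i x)) \<partial>M i) \<le> ennreal (exp (l\<^sup>2 * v / 2))"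
  shows "measure (Pi\<^sub>M I M) {\<omega> \<in> space (Pi\<^sub>M I M). T \<le> \<bar>\<Sum>i\<in>I. f i (\<omega> i)\<bar>} \<le> 2 * exp (- T\<^sup>2 / (2 * card I * v))"
proof -
  have upper: "measure (Pi\<^sub>M I M) {\<omega> \<in> space (Pi\<^sub>M I M). T \<le> (\<Sum>i\<in>I. f i (\<omega> i))} \<le> exp (- T\<^sup>2 / (2 * card I * v))"
    using assms by (rule sum_upper_tail_subgaussian)
  have "measure (Pi\<^sub>M I M) {\<omega> \<in> space (Pi\<^sub>M I M). T \<le> (\<Sum>i\<in>I. - f i (\<omega> i))} \<le> exp (- T\<^sup>2 / (2 * card I * v))"
  proof (rule sum_upper_tail_subgaussian[OF I v T])
    fix i l assume "i \<in> I"
    then show "(\<integral>\<^sup>+x. ennreal (exp (l * - f i x)) \<partial>M i) \<le> ennreal (exp (l\<^sup>2 * v / 2))"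
      using mgf[of i "- l"] by simp
  qed simp
  then have lower: "measure (Pi\<^sub>M I M) {\<omega> \<in> space (Pi\<^sub>M I M). T \<le> - (\<Sum>i\<in>I. f i (\<omega> i))} \<le> exp (- T\<^sup>2 / (2 * card I * v))"
    by (simp add: sum_negf)
  have "{\<omega> \<in> space (Pi\<^sub>M I M). T \<le> \<bar>\<Sum>i\<in>I. f i (\<omega> i)\<bar>} =
      {\<omega> \<in> space (Pi\<^sub>M I M). T \<le> (\<Sum>i\<in>I. f i (\<omega> i))} \<union> {\<omega> \<in> space (Pi\<^sub>M I M). T \<le> - (\<Sum>i\<in>I. f i (\<omega> i))}"
    by auto
  also have "measure (Pi\<^sub>M I M) \<dots> \<le> measure (Pi\<^sub>M I M) {\<omega> \<in> space (Pi\<^sub>M I M). T \<le> (\<Sum>i\<in>I. f i (\<omega> i))} +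
      measure (Pi\<^sub>M I M) {\<omega> \<in> space (Pi\<^sub>M I M). T \<le> - (\<Sum>i\<in>I. f i (\<omega> i))}"
    using I by (intro measure_Un_le) auto
  finally show ?thesis
    using upper lower by simp
qed

end

lemma (in prob_space) prob_Ball_ge:
  assumes "finite C" and events: "\<And>c. c \<in> C \<Longrightarrow> {x \<in> space M. \<not> P c x} \<in> events"
    and bound: "\<And>c. c \<in> C \<Longrightarrow> prob {x \<in> space M. \<not> P c x} \<le> \<epsilon>"
  shows "1 - real (card C) * \<epsilon> \<le> prob {x \<in> space M. \<forall>c\<in>C. P c x}"
proof -
  have "{x \<in> space M. \<forall>c\<in>C. P c x} = space M - (\<Union>c\<in>C. {x \<in> space M. \<not> P c x})"
    by auto
  then have "prob {x \<in> space M. \<forall>c\<in>C. P c x} = 1 - prob (\<Union>c\<in>C. {x \<in> space M. \<not> P c x})"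
    using events by (simp add: prob_compl sets.finite_UN[OF \<open>finite C\<close>])
  moreover have "prob (\<Union>c\<in>C. {x \<in> space M. \<not> P c x}) \<le> (\<Sum>c\<in>C. prob {x \<in> space M. \<not> P c x})"
    using assms by (intro finite_measure_subadditive_finite) auto
  moreover have "(\<Sum>c\<in>C. prob {x \<in> space M. \<not> P c x}) \<le> real (card C) * \<epsilon>"
    using sum_mono[of C _ "\<lambda>_. \<epsilon>", OF bound] by simp
  ultimately show ?thesis
    by linarith
qed

lemma gfun_eq_sum_signed_noise:
  "gfun m ua ub va vb c = (\<Sum>i<m. signed_noise c (ua i) (ub i) (va i, vb i)) / (1 + c)"
  unfolding gfun_def Let_def signed_noise_def xsel_def
  by (simp add: sum_negf sum_subtractf[symmetric] sum_distrib_left sum.distrib[symmetric]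
      sum_divide_distrib add_divide_distrib diff_divide_distrib algebra_simps)

lemma obs_measure_eq_PiM_gaussian_pair:
  "obs_measure m ua ub q = (\<Pi>\<^sub>M i\<in>{..<m}. gaussian_pair (ua i) (ub i) (sqrt (real m / q)))"
  unfolding obs_measure_def gaussian_pair_def ..

lemma card_Cgrid_le: "card (Cgrid m) \<le> m ^ 6"
  unfolding Cgrid_def using card_image_le[of "{1..m ^ 6}" "\<lambda>k. real k / real m ^ 3"] by simp

lemma Cgrid_pos: "c \<in> Cgrid m \<Longrightarrow> c > 0"
  unfolding Cgrid_def by (cases "m = 0") auto

lemma nqueries_pos:
  assumes "m \<ge> 2"
  shows "nqueries m D > 0"
proof -
  have "ln (real m) > 0"
    using assms by simp
  then have "0 < 15 * (real m powr (3/2) / D ^ 2) * ln (real m) + (ln (real m))\<^sup>2"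
    by (simp add: add_nonneg_pos)
  then show ?thesis
    unfolding nqueries_def using assms by simp
qed

lemma prob_space_obs_measure: "q > 0 \<Longrightarrow> prob_space (obs_measure m ua ub q)"
  unfolding obs_measure_eq_PiM_gaussian_pair by (intro prob_space_PiM prob_space_gaussian_pair) auto

lemma prob_gfun_large_le:
  fixes m :: nat and q c :: real
  assumes m: "m \<ge> 2" and q: "q > 0" and c: "c > 0"
  shows "measure (obs_measure m ua ub q) {\<omega> \<in> space (obs_measure m ua ub q).
      \<not> \<bar>gfun m ua ub (\<lambda>i. fst (\<omega> i)) (\<lambda>i. snd (\<omega> i)) c\<bar> \<le> real m / sqrt q * ln (real m)}
    \<le> 2 * exp (- (ln (real m))\<^sup>2 / 2)"
proof -
  define \<sigma> where "\<sigma> = sqrt (real m / q)"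
  have \<sigma>: "\<sigma> > 0" and \<sigma>2: "\<sigma>\<^sup>2 = real m / q"
    unfolding \<sigma>_def using m q by simp_all
  interpret product_prob_space "\<lambda>i. gaussian_pair (ua i) (ub i) \<sigma>" "{..<m}"
    unfolding product_prob_space_def product_prob_space_axioms_def product_sigma_finite_def
    using \<sigma> by (simp add: prob_space_gaussian_pair prob_space_imp_sigma_finite)
  let ?M = "\<Pi>\<^sub>M i\<in>{..<m}. gaussian_pair (ua i) (ub i) \<sigma>"
  let ?S = "\<lambda>\<omega>. \<Sum>i<m. signed_noise c (ua i) (ub i) (\<omega> i)"
  define B where "B = real m / sqrt q * ln (real m)"
  have B: "B > 0"
    unfolding B_def using m q by simp
  have exponent: "(ln (real m))\<^sup>2 / 2 \<le> ((1 + c) * B)\<^sup>2 / (2 * real m * (\<sigma>\<^sup>2 * (1 + c\<^sup>2)))"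
  proof -
    have "((1 + c) * B)\<^sup>2 / (2 * real m * (\<sigma>\<^sup>2 * (1 + c\<^sup>2))) = (1 + c)\<^sup>2 / (1 + c\<^sup>2) * ((ln (real m))\<^sup>2 / 2)"
      unfolding B_def \<sigma>2 using m q add_pos_nonneg[of 1 "c\<^sup>2"]
      by (simp add: power_mult_distrib power_divide divide_simps) (simp add: algebra_simps power2_eq_square)
    moreover have "(1 + c)\<^sup>2 / (1 + c\<^sup>2) \<ge> 1"
      using c by (simp add: field_simps power2_eq_square add_pos_nonneg)
    ultimately show ?thesis
      using mult_right_mono[of 1 "(1 + c)\<^sup>2 / (1 + c\<^sup>2)" "(ln (real m))\<^sup>2 / 2"] by simp
  qed
  have "{\<omega> \<in> space ?M. \<not> \<bar>gfun m ua ub (\<lambda>i. fst (\<omega> i)) (\<lambda>i. snd (\<omega> i)) c\<bar> \<le> B}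
      \<subseteq> {\<omega> \<in> space ?M. (1 + c) * B \<le> \<bar>?S \<omega>\<bar>}"
    using c by (auto simp: gfun_eq_sum_signed_noise abs_divide field_simps)
  then have "measure ?M {\<omega> \<in> space ?M. \<not> \<bar>gfun m ua ub (\<lambda>i. fst (\<omega> i)) (\<lambda>i. snd (\<omega> i)) c\<bar> \<le> B}
      \<le> measure ?M {\<omega> \<in> space ?M. (1 + c) * B \<le> \<bar>?S \<omega>\<bar>}"
    by (intro P.finite_measure_mono) measurable
  also have "\<dots> \<le> 2 * exp (- ((1 + c) * B)\<^sup>2 / (2 * real m * (\<sigma>\<^sup>2 * (1 + c\<^sup>2))))"
    using sum_abs_tail_subgaussian[where v = "\<sigma>\<^sup>2 * (1 + c\<^sup>2)" and T = "(1 + c) * B"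
        and f = "\<lambda>i. signed_noise c (ua i) (ub i)"] m c B \<sigma>
    by (simp add: nn_integral_exp_signed_noise add_pos_nonneg lessThan_empty_iff)
  also have "\<dots> \<le> 2 * exp (- (ln (real m))\<^sup>2 / 2)"
    using exponent by simp
  finally show ?thesis
    unfolding obs_measure_eq_PiM_gaussian_pair \<sigma>_def[symmetric] B_def[symmetric] .
qed

lemma prob_gfun_bounded_on_Cgrid_ge:
  fixes m :: nat and q :: real
  assumes m: "m \<ge> 2" and q: "q > 0"
  shows "1 - 2 * real m ^ 6 * exp (- (ln (real m))\<^sup>2 / 2) \<le>
    measure (obs_measure m ua ub q) {\<omega> \<in> space (obs_measure m ua ub q). \<forall>c\<in>Cgrid m.
       \<bar>gfun m ua ub (\<lambda>i. fst (\<omega> i)) (\<lambda>i. snd (\<omega> i)) c\<bar> \<le> real m / sqrt q * ln (real m)}"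
proof -
  interpret prob_space "obs_measure m ua ub q"
    using q by (rule prob_space_obs_measure)
  have "1 - real (card (Cgrid m)) * (2 * exp (- (ln (real m))\<^sup>2 / 2)) \<le>
    prob {\<omega> \<in> space (obs_measure m ua ub q). \<forall>c\<in>Cgrid m.
       \<bar>gfun m ua ub (\<lambda>i. fst (\<omega> i)) (\<lambda>i. snd (\<omega> i)) c\<bar> \<le> real m / sqrt q * ln (real m)}"
  proof (rule prob_Ball_ge)
    show "finite (Cgrid m)"
      unfolding Cgrid_def by simp
    show "{\<omega> \<in> space (obs_measure m ua ub q).
        \<not> \<bar>gfun m ua ub (\<lambda>i. fst (\<omega> i)) (\<lambda>i. snd (\<omega> i)) c\<bar> \<le> real m / sqrt q * ln (real m)} \<in> events" for c
      unfolding gfun_eq_sum_signed_noise obs_measure_eq_PiM_gaussian_pair prod.collapse by measurable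
  qed (use m q Cgrid_pos prob_gfun_large_le in blast)
  moreover have "real (card (Cgrid m)) * (2 * exp (- (ln (real m))\<^sup>2 / 2)) \<le> real m ^ 6 * (2 * exp (- (ln (real m))\<^sup>2 / 2))"
    using card_Cgrid_le[of m] by (intro mult_right_mono) (simp_all flip: of_nat_power)
  ultimately show ?thesis
    by (simp only: mult_ac)
qed

theorem lemma8:
  fixes ua ub :: "nat \<Rightarrow> nat \<Rightarrow> real" and \<Delta> :: "nat \<Rightarrow> real"
  assumes util: "\<And>m i. i < m \<Longrightarrow> 0 \<le> ua m i \<and> ua m i \<le> 1 \<and> 0 \<le> ub m i \<and> ub m i \<le> 1"
    and envy_gap: "\<forall>\<^sub>F m in sequentially.
          Min ((\<lambda>A. envy m (ua m) (ub m) A) ` Pow {..<m}) \<le> - \<Delta> m"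
    and Delta_lower: "\<forall>\<^sub>F m in sequentially. \<Delta> m \<ge> real m powr (1/4) * (ln (real m))^2"
    and Delta_upper: "\<Delta> \<in> o(\<lambda>m. real m / ln (real m))"
  shows "(\<lambda>m. measure (obs_measure m (ua m) (ub m) (nqueries m (\<Delta> m)))
            {\<omega> \<in> space (obs_measure m (ua m) (ub m) (nqueries m (\<Delta> m))).
               \<forall>c\<in>Cgrid m.
                 \<bar>gfun m (ua m) (ub m) (\<lambda>i. fst (\<omega> i)) (\<lambda>i. snd (\<omega> i)) c\<bar>
                   \<le> real m / sqrt (nqueries m (\<Delta> m)) * ln (real m)})
         \<longlonglongrightarrow> 1"
proof -
  have lim: "(\<lambda>m. 1 - 2 * real m ^ 6 * exp (- (ln (real m))\<^sup>2 / 2)) \<longlonglongrightarrow> 1"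
    by real_asymp
  show ?thesis
    by (rule tendsto_sandwich[OF _ _ lim tendsto_const];
        rule eventually_mono[OF eventually_ge_at_top[of "2::nat"]])
      (blast intro: prob_gfun_bounded_on_Cgrid_ge nqueries_pos prob_space.prob_le_1 prob_space_obs_measure)+
qed

end
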